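(* Let $n,m$ be positive integers (spatial dimensions), let $a,A$ be real numbers with $A\neq-3$ and $$\frac{a+3}{2}=\frac{2}{A+3}.$$ Let $\eta,\mathcal{E}$ be real, let $l,\ell$ be real with $$l+\frac n2-1=\frac{2}{A+3}\left(\ell+\frac m2-1\right),$$ and set $E=-\eta\left(\frac{2}{A+3}\right)^2$, $\xi=-\mathcal{E}\left(\frac{2}{A+3}\right)^2$. Suppose $u\in C^2((0,\infty))$ satisfies the $n$-dimensional radial equation of $U(r)=\xi r^{a+1}$: $$u''(r)+\left[E-\frac{\left(l-\frac32+\frac n2\right)\left(l-\frac12+\frac n2\right)}{r^{2}}-\xi r^{a+1}\right]u(r)=0 .$$ Then $v(\rho)=\rho^{-(A+1)/4}u\!\left(\rho^{(A+3)/2}\right)$ (coordinates $r=\rho^{(A+3)/2}$, $u(r)=\rho^{(A+1)/4}v(\rho)$) satisfies the $m$-dimensional radial equation of $V(\rho)=\eta\rho^{A+1}$: $$v''(\rho)+\left[\mathcal{E}-\frac{\left(\ell-\frac32+\frac m2\right)\left(\ell-\frac12+\frac m2\right)}{\rho^{2}}-\eta\rho^{A+1}\right]v(\rho)=0 .$$ In this sense the $n$-dimensional potential $\xi r^{a+1}$ and the $m$-dimensional potential $\eta\rho^{A+1}$ are quantum Newtonianly dual, bound-state eigenfunctions of $U$ (energy $E$, angular quantum number $l$) being transformed into eigenfunctions of $V$ (energy $\mathcal{E}$, angular quantum number $\ell$).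
   Context: In $d$ spatial dimensions the radial equation for a central potential $W$ (units $\hbar=2m=1$), with $u(r)=rR(r)$ where $R$ is the radial wave function, energy $E$ and angular quantum number $l$, is $u''+\left[E-\frac{(l-\frac32+\frac d2)(l-\frac12+\frac d2)}{r^2}-W(r)\right]u=0$. *)

theory Defs
  imports "HOL-Analysis.Analysis"
begin

end

theory Submission
  imports Defs
begin

text \<open>The Liouville substitution \<open>r = \<rho>\<^sup>p\<close>, \<open>v(\<rho>) = \<rho>\<^bsup>(1-p)/2\<^esup> u(\<rho>\<^sup>p)\<close> turns
  \<open>u'' = Q u\<close> into \<open>v'' = (p\<^sup>2 \<rho>\<^bsup>2p-2\<^esup> Q(\<rho>\<^sup>p) + (p\<^sup>2 - 1)/(4\<rho>\<^sup>2)) v\<close>; the exponent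
  \<open>(1-p)/2\<close> is the one that kills the first-order term. For \<open>Q(r) = -E + L/r\<^sup>2 + \<xi> r\<^bsup>a+1\<^esup>\<close>
  with \<open>p(a+1) = 2 - 2p\<close> the factor \<open>\<rho>\<^bsup>2p-2\<^esup>\<close> turns the power term into a constant and the
  constant into a power, so energy and coupling constant trade places, while the centrifugal
  coefficient becomes \<open>p\<^sup>2 L + (p\<^sup>2 - 1)/4\<close>.\<close>

lemma has_real_derivative_powr_mult_comp_powr:
  fixes g :: "real \<Rightarrow> real"
  assumes x: "x > 0" and g: "(g has_real_derivative g') (at (x powr p))"
  shows "((\<lambda>\<rho>. \<rho> powr k * g (\<rho> powr p)) has_real_derivative
           k * x powr (k - 1) * g (x powr p) + p * x powr (k + p - 1) * g') (at x)"
proof -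
  have "x powr k * (g' * (p * x powr (p - 1))) = p * x powr (k + p - 1) * g'"
    using x by (simp add: powr_add[symmetric] algebra_simps)
  then show ?thesis
    by (intro DERIV_cong[OF DERIV_mult[OF has_real_derivative_powr[OF x]
          DERIV_chain2[OF g has_real_derivative_powr[OF x]]]]) (simp add: algebra_simps)
qed

lemma liouville_second_derivative:
  fixes u u' u'' :: "real \<Rightarrow> real" and p \<rho> :: real
  defines "v \<equiv> \<lambda>\<rho>. \<rho> powr ((1 - p) / 2) * u (\<rho> powr p)"
  assumes u': "\<forall>r>0. (u has_real_derivative u' r) (at r)"
    and u'': "\<forall>r>0. (u' has_real_derivative u'' r) (at r)"
    and \<rho>: "\<rho> > 0"
  shows "v differentiable (at \<rho>)" and "deriv v differentiable (at \<rho>)"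
    and "deriv (deriv v) \<rho> = (p\<^sup>2 - 1) / (4 * \<rho>\<^sup>2) * v \<rho>
           + \<rho> powr ((1 - p) / 2) * (p\<^sup>2 * \<rho> powr (2 * p - 2) * u'' (\<rho> powr p))"
proof -
  define k where "k = (1 - p) / 2"
  define w where "w = (\<lambda>x. k * (x powr (k - 1) * u (x powr p))
                          + p * (x powr (k + p - 1) * u' (x powr p)))"
  have dv: "(v has_real_derivative w x) (at x)" if "x > 0" for x
    using has_real_derivative_powr_mult_comp_powr[OF that, of u "u' (x powr p)" p k]
      that u' unfolding v_def w_def k_def[symmetric] by (simp add: algebra_simps)
  have "(w has_real_derivative
          k * ((k - 1) * \<rho> powr (k - 1 - 1) * u (\<rho> powr p) + p * \<rho> powr (k - 1 + p - 1) * u' (\<rho> powr p))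
          + p * ((k + p - 1) * \<rho> powr (k + p - 1 - 1) * u' (\<rho> powr p)
                 + p * \<rho> powr (k + p - 1 + p - 1) * u'' (\<rho> powr p))) (at \<rho>)"
    unfolding w_def using \<rho> u' u''
    by (intro DERIV_add DERIV_cmult has_real_derivative_powr_mult_comp_powr) auto
  \<comment> \<open>The choice k = (1 - p)/2 makes the coefficient 2k + p - 1 of the first-order term vanish.\<close>
  also have "k * ((k - 1) * \<rho> powr (k - 1 - 1) * u (\<rho> powr p) + p * \<rho> powr (k - 1 + p - 1) * u' (\<rho> powr p))
          + p * ((k + p - 1) * \<rho> powr (k + p - 1 - 1) * u' (\<rho> powr p)
                 + p * \<rho> powr (k + p - 1 + p - 1) * u'' (\<rho> powr p))
        = (p\<^sup>2 - 1) / (4 * \<rho>\<^sup>2) * v \<rho> + \<rho> powr k * (p\<^sup>2 * \<rho> powr (2 * p - 2) * u'' (\<rho> powr p))"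
  proof -
    have c0: "k * (k - 1) = (p\<^sup>2 - 1) / 4" and c1: "k * p + p * (k + p - 1) = 0"
      unfolding k_def by (simp_all add: field_simps power2_eq_square)
    have e0: "\<rho> powr (k - 1 - 1) = \<rho> powr k / \<rho>\<^sup>2"
      and e1: "\<rho> powr (k - 1 + p - 1) = \<rho> powr (k + p - 1 - 1)"
      and e2: "\<rho> powr (k + p - 1 + p - 1) = \<rho> powr k * \<rho> powr (2 * p - 2)"
      using \<rho> powr_add[of \<rho> k "2 * p - 2"]
      by (simp_all add: powr_diff power2_eq_square algebra_simps)
    show ?thesis
      unfolding e0 e1 e2 v_def k_def[symmetric]
      using arg_cong[OF c0, of "\<lambda>c. c * (\<rho> powr k / \<rho>\<^sup>2) * u (\<rho> powr p)"]
        arg_cong[OF c1, of "\<lambda>c. c * \<rho> powr (k + p - 1 - 1) * u' (\<rho> powr p)"]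
      by (simp add: algebra_simps power2_eq_square)
  qed
  finally have dw: "(w has_real_derivative \<dots>) (at \<rho>)" .
  have "(deriv v has_real_derivative
          (p\<^sup>2 - 1) / (4 * \<rho>\<^sup>2) * v \<rho> + \<rho> powr k * (p\<^sup>2 * \<rho> powr (2 * p - 2) * u'' (\<rho> powr p))) (at \<rho>)"
    by (rule has_field_derivative_transform_within_open[OF dw, of "{0<..}"])
       (use \<rho> dv[THEN DERIV_imp_deriv] in auto)
  then show "deriv v differentiable (at \<rho>)"
    and "deriv (deriv v) \<rho> = (p\<^sup>2 - 1) / (4 * \<rho>\<^sup>2) * v \<rho>
           + \<rho> powr ((1 - p) / 2) * (p\<^sup>2 * \<rho> powr (2 * p - 2) * u'' (\<rho> powr p))"
    unfolding k_def by (auto simp: real_differentiable_def DERIV_imp_deriv)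
  show "v differentiable (at \<rho>)"
    using dv[OF \<rho>] by (auto simp: real_differentiable_def)
qed

lemma power_potential_duality:
  fixes p a \<rho> E \<xi> EE \<eta> L :: real
  assumes \<rho>: "\<rho> > 0" and a: "p * (a + 1) = 2 - 2 * p"
    and E: "E * p\<^sup>2 = - \<eta>" and \<xi>: "\<xi> * p\<^sup>2 = - EE"
  shows "(p\<^sup>2 - 1) / (4 * \<rho>\<^sup>2)
           + p\<^sup>2 * \<rho> powr (2 * p - 2) * (- (E - L / (\<rho> powr p)\<^sup>2 - \<xi> * (\<rho> powr p) powr (a + 1)))
         = - (EE - (p\<^sup>2 * L + (p\<^sup>2 - 1) / 4) / \<rho>\<^sup>2 - \<eta> * \<rho> powr (2 * p - 2))"
proof -
  have "\<rho> powr (2 * p - 2) = \<rho> powr (p + p) / \<rho> powr 2"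
    by (metis mult_2 powr_diff)
  also have "\<dots> = (\<rho> powr p)\<^sup>2 / \<rho>\<^sup>2"
    using \<rho> by (simp only: powr_add powr_numeral power2_eq_square)
  finally have y2: "\<rho> powr (2 * p - 2) / (\<rho> powr p)\<^sup>2 = 1 / \<rho>\<^sup>2"
    using \<rho> by simp
  have "\<rho> powr (2 * p - 2) * (\<rho> powr p) powr (a + 1) = \<rho> powr ((2 * p - 2) + p * (a + 1))"
    by (simp only: powr_powr powr_add[symmetric])
  then have ya: "\<rho> powr (2 * p - 2) * (\<rho> powr p) powr (a + 1) = 1"
    using \<rho> unfolding a by simp
  have "p\<^sup>2 * \<rho> powr (2 * p - 2) * (- (E - L / (\<rho> powr p)\<^sup>2 - \<xi> * (\<rho> powr p) powr (a + 1)))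
      = - (E * p\<^sup>2) * \<rho> powr (2 * p - 2) + p\<^sup>2 * L * (\<rho> powr (2 * p - 2) / (\<rho> powr p)\<^sup>2)
        + \<xi> * p\<^sup>2 * (\<rho> powr (2 * p - 2) * (\<rho> powr p) powr (a + 1))"
    by (simp add: algebra_simps)
  also have "\<dots> = \<eta> * \<rho> powr (2 * p - 2) + p\<^sup>2 * L / \<rho>\<^sup>2 - EE"
    unfolding y2 ya E \<xi> by simp
  finally show ?thesis
    by (simp add: diff_divide_distrib add_divide_distrib)
qed

lemma power_potential_radial_duality:
  fixes u u' u'' :: "real \<Rightarrow> real" and p a E \<xi> EE \<eta> L \<rho> :: real
  defines "v \<equiv> \<lambda>\<rho>. \<rho> powr ((1 - p) / 2) * u (\<rho> powr p)"
  assumes u': "\<forall>r>0. (u has_real_derivative u' r) (at r)"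
    and u'': "\<forall>r>0. (u' has_real_derivative u'' r) (at r)"
    and ode: "\<forall>r>0. u'' r + (E - L / r\<^sup>2 - \<xi> * r powr (a + 1)) * u r = 0"
    and a: "p * (a + 1) = 2 - 2 * p" and E: "E * p\<^sup>2 = - \<eta>" and \<xi>: "\<xi> * p\<^sup>2 = - EE"
    and \<rho>: "\<rho> > 0"
  shows "v differentiable (at \<rho>)" and "deriv v differentiable (at \<rho>)"
    and "deriv (deriv v) \<rho>
           + (EE - (p\<^sup>2 * L + (p\<^sup>2 - 1) / 4) / \<rho>\<^sup>2 - \<eta> * \<rho> powr (2 * p - 2)) * v \<rho> = 0"
proof -
  note v = liouville_second_derivative[OF u' u'' \<rho>, of p, folded v_def]
  show "v differentiable (at \<rho>)" and "deriv v differentiable (at \<rho>)"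
    using v(1,2) .
  have ode_at: "u'' (\<rho> powr p) = - (E - L / (\<rho> powr p)\<^sup>2 - \<xi> * (\<rho> powr p) powr (a + 1)) * u (\<rho> powr p)"
    using ode \<rho> by (simp add: algebra_simps)
  have "deriv (deriv v) \<rho>
      = ((p\<^sup>2 - 1) / (4 * \<rho>\<^sup>2)
          + p\<^sup>2 * \<rho> powr (2 * p - 2) * (- (E - L / (\<rho> powr p)\<^sup>2 - \<xi> * (\<rho> powr p) powr (a + 1))))
        * v \<rho>"
    unfolding v(3) ode_at by (simp add: v_def algebra_simps)
  then show "deriv (deriv v) \<rho>
      + (EE - (p\<^sup>2 * L + (p\<^sup>2 - 1) / 4) / \<rho>\<^sup>2 - \<eta> * \<rho> powr (2 * p - 2)) * v \<rho> = 0"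
    unfolding power_potential_duality[OF \<rho> a E \<xi>] by (simp add: algebra_simps)
qed

theorem mainTheorem4:
  fixes n m :: nat and a A \<eta> EE l ll E \<xi> :: real
    and u :: "real \<Rightarrow> real"
  assumes "n \<ge> 1" and "m \<ge> 1"
    and "A \<noteq> -3"
    and "(a + 3) / 2 = 2 / (A + 3)"
    and "l + real n / 2 - 1 = 2 / (A + 3) * (ll + real m / 2 - 1)"
    and "E = - \<eta> * (2 / (A + 3))^2"
    and "\<xi> = - EE * (2 / (A + 3))^2"
    and "\<forall>r>0. u differentiable (at r)"
    and "\<forall>r>0. deriv u differentiable (at r)"
    and "continuous_on {0<..} (deriv (deriv u))"
    and "\<forall>r>0. deriv (deriv u) r
           + (E - (l - 3/2 + real n / 2) * (l - 1/2 + real n / 2) / r^2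
                - \<xi> * r powr (a + 1)) * u r = 0"
  shows "\<forall>\<rho>>0. (\<lambda>\<rho>. \<rho> powr (-(A + 1) / 4) * u (\<rho> powr ((A + 3) / 2))) differentiable (at \<rho>)
          \<and> deriv (\<lambda>\<rho>. \<rho> powr (-(A + 1) / 4) * u (\<rho> powr ((A + 3) / 2))) differentiable (at \<rho>)
          \<and> deriv (deriv (\<lambda>\<rho>. \<rho> powr (-(A + 1) / 4) * u (\<rho> powr ((A + 3) / 2)))) \<rho>
             + (EE - (ll - 3/2 + real m / 2) * (ll - 1/2 + real m / 2) / \<rho>^2
                 - \<eta> * \<rho> powr (A + 1))
               * (\<rho> powr (-(A + 1) / 4) * u (\<rho> powr ((A + 3) / 2))) = 0"
proof -
  define p where "p = (A + 3) / 2"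
  define L where "L = (l - 3/2 + real n / 2) * (l - 1/2 + real n / 2)"
  have p: "p \<noteq> 0" and inv_p: "2 / (A + 3) = 1 / p"
    using assms(3) by (auto simp: p_def)
  have exps: "A + 1 = 2 * p - 2" "(A + 3) / 2 = p" "-(2 * p - 2) / 4 = (1 - p) / 2"
    by (simp_all add: p_def field_simps)
  have a: "p * (a + 1) = 2 - 2 * p"
    using assms(4) p unfolding inv_p by (simp add: field_simps)
  have E: "E * p\<^sup>2 = - \<eta>" and \<xi>: "\<xi> * p\<^sup>2 = - EE"
    using assms(6,7) p unfolding inv_p by (simp_all add: field_simps)
  have lp: "p * (l + real n / 2 - 1) = ll + real m / 2 - 1"
    using assms(5) p unfolding inv_p by simp
  have "p\<^sup>2 * L + (p\<^sup>2 - 1) / 4 = (p * (l + real n / 2 - 1))\<^sup>2 - 1 / 4"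
    unfolding L_def by (simp add: power2_eq_square field_simps)
  then have L: "p\<^sup>2 * L + (p\<^sup>2 - 1) / 4 = (ll - 3/2 + real m / 2) * (ll - 1/2 + real m / 2)"
    unfolding lp by (simp add: power2_eq_square algebra_simps)
  have "\<forall>r>0. (u has_real_derivative deriv u r) (at r)"
    and "\<forall>r>0. (deriv u has_real_derivative deriv (deriv u) r) (at r)"
    using assms(8,9) by (simp_all add: DERIV_deriv_iff_real_differentiable)
  from power_potential_radial_duality[OF this assms(11)[folded L_def] a E \<xi>]
  show ?thesis
    unfolding exps L by simp
qed

end
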